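(* Let $\mathbf{F}$ be a finite field with $q$ elements, $n\ge1$, and $V_j=\operatorname{span}(b_1,\dots,b_j)\subseteq\mathbf{F}^n$ for the standard basis $b_1,\dots,b_n$. Let $T\colon V_{n-1}\to V_n$ be a semi-idempotent partial linear map with domain $V_{n-1}$ such that $\operatorname{im}T\not\subset V_{n-1}$, and let $r\ge0$. Then for every function $f\colon\mathbf{Z}_{\ge0}\to\mathbf{Z}$, \[ \sum_{\substack{S\colon V_n\to V_n\ \text{semi-idempotent}\\ \operatorname{rank} S\le r,\ S|_{V_{n-1}}=T}}\mu(\mathrm{srk}\,S)\,f(\operatorname{rank} S)=0. \]
   Context: A partial linear map on $V$ is a linear map $T\colon W\to V$ from a subspace $W$; composition of partial maps $T\circ S$ has domain $S^{-1}(\operatorname{dom}T)$; $T^0=\mathrm{id}$. A partial linear map $T$ is semi-idempotent if for some $N\ge0$, $T$ acts as the identity on $\operatorname{im}T^N$; for an operator $S\colon V\to V$ this is equivalent to $V=X\oplus Y$ with $S|_X=\mathrm{id}$, $S|_Y$ nilpotent, $X,Y$ $S$-stable. $\mathrm{srk}$ denotes the stable rank: $\dim\operatorname{im}T^j$ for $j\gg0$. $\mu(i)=(-1)^iq^{\binom i2}$. *)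

theory Defs
  imports Complex_Main "HOL-Library.Function_Algebras" "HOL-Library.Cardinality"
begin

text \<open>Vectors of F^n are functions nat => F vanishing at indices >= n; index i
  corresponds to the basis vector b_(i+1).  V j = span(b_1,...,b_j).\<close>

definition fscale :: "'a::field \<Rightarrow> (nat \<Rightarrow> 'a) \<Rightarrow> (nat \<Rightarrow> 'a)" where
  "fscale c v = (\<lambda>i. c * v i)"

lemma vector_space_fscale: "vector_space fscale"
  by unfold_locales (auto simp: fscale_def fun_eq_iff algebra_simps)

definition Vsp :: "nat \<Rightarrow> (nat \<Rightarrow> 'a::zero) set" where
  "Vsp j = {v. \<forall>i\<ge>j. v i = 0}"

definition vdim :: "(nat \<Rightarrow> 'a::field) set \<Rightarrow> nat" where
  "vdim W = vector_space.dim fscale W"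

type_synonym 'a pmap = "(nat \<Rightarrow> 'a) set \<times> ((nat \<Rightarrow> 'a) \<Rightarrow> (nat \<Rightarrow> 'a))"

definition pdom :: "'a pmap \<Rightarrow> (nat \<Rightarrow> 'a) set" where "pdom T = fst T"
definition papp :: "'a pmap \<Rightarrow> (nat \<Rightarrow> 'a) \<Rightarrow> (nat \<Rightarrow> 'a)" where "papp T = snd T"
definition pim :: "'a pmap \<Rightarrow> (nat \<Rightarrow> 'a) set" where "pim T = papp T ` pdom T"

definition pcomp :: "'a pmap \<Rightarrow> 'a pmap \<Rightarrow> 'a pmap" where
  "pcomp T S = ({x \<in> pdom S. papp S x \<in> pdom T}, papp T \<circ> papp S)"

primrec ppow :: "(nat \<Rightarrow> 'a) set \<Rightarrow> 'a pmap \<Rightarrow> nat \<Rightarrow> 'a pmap" where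
  "ppow V T 0 = (V, id)"
| "ppow V T (Suc k) = pcomp T (ppow V T k)"

definition semi_idempotent :: "(nat \<Rightarrow> 'a) set \<Rightarrow> 'a pmap \<Rightarrow> bool" where
  "semi_idempotent V T \<longleftrightarrow>
     (\<exists>N. \<forall>x \<in> pim (ppow V T N). x \<in> pdom T \<and> papp T x = x)"

definition prank :: "'a::field pmap \<Rightarrow> nat" where
  "prank T = vdim (pim T)"

definition srk :: "(nat \<Rightarrow> 'a::field) set \<Rightarrow> 'a pmap \<Rightarrow> nat" where
  "srk V T = (THE d. \<exists>J. \<forall>j\<ge>J. vdim (pim (ppow V T j)) = d)"

definition mu :: "int \<Rightarrow> nat \<Rightarrow> int" where
  "mu q i = (-1)^i * q ^ (i choose 2)"

definition mats :: "nat \<Rightarrow> (nat \<Rightarrow> nat \<Rightarrow> 'a::zero) set" where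
  "mats n = {A. \<forall>i j. (i \<ge> n \<or> j \<ge> n) \<longrightarrow> A i j = 0}"

definition matop :: "nat \<Rightarrow> (nat \<Rightarrow> nat \<Rightarrow> 'a::field) \<Rightarrow> 'a pmap" where
  "matop n A = (Vsp n, \<lambda>v i. if i < n then (\<Sum>j<n. A i j * v j) else 0)"

definition linear_on :: "(nat \<Rightarrow> 'a::field) set \<Rightarrow> ((nat \<Rightarrow> 'a) \<Rightarrow> (nat \<Rightarrow> 'a)) \<Rightarrow> bool" where
  "linear_on W f \<longleftrightarrow> (\<forall>x\<in>W. \<forall>y\<in>W. f (x + y) = f x + f y) \<and>
                      (\<forall>c. \<forall>x\<in>W. f (fscale c x) = fscale c (f x))"

end

theory Submission
  imports Defs "HOL-Computational_Algebra.Polynomial"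
begin

(* Extend T by zero to a total map T0 on V = F^n. Let D be the set of vectors whose whole
   T0-orbit stays in V_(n-1): the common domain of all powers of T. Semi-idempotence of T
   gives the Fitting decomposition D = X + Y, with T the identity on X and nilpotent on Y.
   If m is least with dom T^m = D and e lies in dom T^(m-1) but not in D, the chain
   e, T e, ..., T^(m-1) e complements D in V and only its last member leaves V_(n-1); so an
   extension S of T is determined by y = S (T^(m-1) e).
   S is semi-idempotent iff y lies in D or in T^(m-1) e + Y (the minimal polynomial of e
   modulo D must divide X^K (X - 1)), with stable rank dim X resp. dim X + 1. The rank of S
   is unchanged when y moves by an element of T(V_(n-1)), which contains X and T^(m-1) e.
   Hence the sum over y in D is q^(dim X) times the sum over Y, and
   mu (dim X + 1) = - q^(dim X) mu (dim X) makes the two families cancel. *)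

section \<open>Vector spaces of finitely supported sequences\<close>

interpretation fs: vector_space fscale
  by (rule vector_space_fscale)

interpretation fsp: vector_space_pair fscale fscale
  by (simp add: vector_space_pair_def vector_space_fscale)

declare plus_fun_apply [simp del] zero_fun_apply [simp del] minus_apply [simp del] uminus_apply [simp del]

lemma fscale_apply: "fscale a x i = a * x i"
  by (simp add: fscale_def)

lemma sum_apply: "(\<Sum>i\<in>A. f i) x = (\<Sum>i\<in>A. f i x)"
  by (induction A rule: infinite_finite_induct) (simp_all add: plus_fun_apply zero_fun_apply)

lemmas vec_apply_simps = plus_fun_apply zero_fun_apply minus_apply uminus_apply fscale_apply sum_apply

abbreviation fs_linear :: "((nat \<Rightarrow> 'a::field) \<Rightarrow> (nat \<Rightarrow> 'a)) \<Rightarrow> bool" where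
  "fs_linear \<equiv> Vector_Spaces.linear fscale fscale"

lemma fs_linearI:
  assumes "\<And>x y. S (x + y) = S x + S y" and "\<And>c x. S (fscale c x) = fscale c (S x)"
  shows "fs_linear S"
  using assms by (simp add: Vector_Spaces.linear_iff vector_space_fscale)

lemma linear_funpow:
  assumes "fs_linear S"
  shows "fs_linear (S ^^ k)"
  by (induction k) (auto simp only: funpow.simps intro: fs.linear_id Vector_Spaces.linear_compose assms)

context vector_space
begin

lemma card_span_independent:
  assumes "finite (UNIV :: 'a set)" and "finite B" and "independent B"
  shows "card (span B) = CARD('a) ^ card B"
  using assms(2,3)
proof (induction B rule: finite_induct)
  case empty
  then show ?case by (simp add: span_empty)
next
  case (insert x B)
  have indep: "independent B" using insert.prems independent_mono by blast
  have x_notin: "x \<notin> span B" using insert.prems insert.hyps(2) independent_insert by metis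
  let ?g = "\<lambda>(a, v). a *s x + v"
  have span_eq: "span (insert x B) = ?g ` (UNIV \<times> span B)"
  proof (rule set_eqI, rule iffI)
    fix z assume "z \<in> span (insert x B)"
    then obtain k where "z - k *s x \<in> span B" by (auto simp: span_insert)
    then show "z \<in> ?g ` (UNIV \<times> span B)"
      by (intro image_eqI[of _ _ "(k, z - k *s x)"]) auto
  next
    fix z assume "z \<in> ?g ` (UNIV \<times> span B)"
    then obtain a v where "v \<in> span B" "z = a *s x + v" by auto
    then show "z \<in> span (insert x B)"
      by (auto simp: span_insert intro!: exI[of _ a])
  qed
  have "inj_on ?g (UNIV \<times> span B)"
  proof (rule inj_onI, clarify)
    fix a v a' v'
    assume v: "v \<in> span B" "v' \<in> span B" and eq: "a *s x + v = a' *s x + v'"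
    have "(a - a') *s x = v' - v"
      using eq by (simp add: scale_left_diff_distrib algebra_simps)
    then have "(a - a') *s x \<in> span B" using v span_diff by auto
    then have "a = a'"
      using x_notin span_scale[of "(a - a') *s x" B "inverse (a - a')"] by (cases "a = a'") auto
    then show "a = a' \<and> v = v'" using eq by simp
  qed
  then have "card (span (insert x B)) = CARD('a) * card (span B)"
    by (simp add: span_eq card_image card_cartesian_product)
  then show ?case using insert indep by simp
qed

lemma card_subspace:
  assumes "finite (UNIV :: 'a set)" and "subspace W" and "finite W"
  shows "card W = CARD('a) ^ dim W"
proof -
  obtain B where B: "B \<subseteq> W" "independent B" "W \<subseteq> span B" "card B = dim W"
    using basis_exists by blast
  have "span B = W" using B span_minimal[OF B(1) assms(2)] by auto
  then show ?thesis
    using card_span_independent[OF assms(1) finite_subset[OF B(1) assms(3)] B(2)] B(4) by simp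
qed

lemma dim_insert_notin_span:
  assumes "finite S" and "x \<notin> span S"
  shows "dim (insert x S) = dim S + 1"
proof -
  obtain B where B: "B \<subseteq> span S" "independent B" "span S \<subseteq> span B" "card B = dim (span S)"
    using basis_exists [of "span S"] by blast
  have "finite B" using independent_span_bound[OF assms(1) B(2) B(1)] by simp
  have "dim (span (insert x S)) = Suc (dim S)"
  proof (rule dim_unique)
    show "insert x B \<subseteq> span (insert x S)"
      by (meson B(1) insertI1 insert_subset order_trans span_base span_mono subset_insertI)
    show "span (insert x S) \<subseteq> span (insert x B)"
      by (metis B(1) B(3) span_breakdown_eq span_subspace subsetI subspace_span)
    show "independent (insert x B)"
      by (metis B(1-3) independent_insert span_subspace subspace_span assms(2))
    show "card (insert x B) = Suc (dim S)"
      using B assms \<open>finite B\<close>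
      by (metis card_insert_disjoint dim_span span_base span_subspace subspace_span in_mono)
  qed
  then show ?thesis by simp
qed

lemma image_kernel_decomposition:
  assumes lin: "Vector_Spaces.linear (*s) (*s) P" and D: "subspace D"
    and PD: "\<And>x. x \<in> D \<Longrightarrow> P x \<in> D"
    and idem: "\<And>x. x \<in> D \<Longrightarrow> P (P x) = P x"
  shows "bij_betw (\<lambda>(x, y). x + y) (P ` D \<times> {d \<in> D. P d = 0}) D"
proof -
  interpret P: Vector_Spaces.linear "(*s)" "(*s)" P by (fact lin)
  show ?thesis
  proof (rule bij_betwI')
    fix p q assume p: "p \<in> P ` D \<times> {d \<in> D. P d = 0}" and q: "q \<in> P ` D \<times> {d \<in> D. P d = 0}"
    have "P (fst p + snd p) = fst p" "P (fst q + snd q) = fst q"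
      using p q idem by (auto simp: P.add)
    then show "((\<lambda>(x, y). x + y) p = (\<lambda>(x, y). x + y) q) = (p = q)"
      by (cases p, cases q) auto
  next
    fix p assume "p \<in> P ` D \<times> {d \<in> D. P d = 0}"
    then show "(\<lambda>(x, y). x + y) p \<in> D" using PD D by (auto intro: subspace_add)
  next
    fix d assume d: "d \<in> D"
    have "P (d - P d) = 0" using d idem by (simp add: P.diff)
    moreover have "d - P d \<in> D" using d PD D by (simp add: subspace_diff)
    ultimately show "\<exists>p\<in>P ` D \<times> {d \<in> D. P d = 0}. d = (\<lambda>(x, y). x + y) p"
      using d by (intro bexI[of _ "(P d, d - P d)"]) auto
  qed
qed

end

lemma finite_Vsp: "finite (Vsp n :: (nat \<Rightarrow> 'a::{finite,zero}) set)"
proof -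
  have "Vsp n \<subseteq> (\<lambda>l i. if i < n then l ! i else 0) ` {l :: 'a list. length l = n}"
  proof
    fix v :: "nat \<Rightarrow> 'a" assume "v \<in> Vsp n"
    then have "v = (\<lambda>i. if i < n then map v [0..<n] ! i else 0)"
      by (auto simp: Vsp_def fun_eq_iff)
    then show "v \<in> (\<lambda>l i. if i < n then l ! i else 0) ` {l. length l = n}"
      by (intro image_eqI[of _ _ "map v [0..<n]"]) auto
  qed
  moreover have "finite {l :: 'a list. length l = n}"
    using finite_lists_length_eq[of "UNIV :: 'a set" n] by simp
  ultimately show ?thesis using finite_subset by blast
qed

lemma subspace_Vsp: "fs.subspace (Vsp j)"
  by (auto simp: fs.subspace_def Vsp_def vec_apply_simps)

lemma funpow_Suc_eq_mono:
  fixes R :: "'b \<Rightarrow> 'b"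
  assumes "\<forall>v\<in>A. (R ^^ Suc K) v = (R ^^ K) v" and "K \<le> K'" and "v \<in> A"
  shows "(R ^^ Suc K') v = (R ^^ K') v"
proof -
  obtain j where j: "K' = j + K" using assms(2) le_Suc_ex by (metis add.commute)
  have "(R ^^ Suc K') v = (R ^^ j) ((R ^^ Suc K) v)"
    by (simp only: j add_Suc_right[symmetric] funpow_add comp_apply)
  also have "\<dots> = (R ^^ K') v" using assms by (simp add: j funpow_add)
  finally show ?thesis .
qed

lemma the_eventual_value:
  fixes g :: "nat \<Rightarrow> 'b"
  assumes "\<forall>j\<ge>J0. g j = s0"
  shows "(THE d. \<exists>J. \<forall>j\<ge>J. g j = d) = s0"
proof (rule the_equality)
  show "\<exists>J. \<forall>j\<ge>J. g j = s0" using assms by blast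
next
  fix d assume "\<exists>J. \<forall>j\<ge>J. g j = d"
  then obtain J where "\<forall>j\<ge>J. g j = d" by blast
  then have "g (max J J0) = d" by simp
  then show "d = s0" using assms by simp
qed

section \<open>Polynomials acting on linear maps\<close>

definition poly_apply ::
    "'a::field poly \<Rightarrow> ((nat \<Rightarrow> 'a) \<Rightarrow> (nat \<Rightarrow> 'a)) \<Rightarrow> (nat \<Rightarrow> 'a) \<Rightarrow> (nat \<Rightarrow> 'a)" where
  "poly_apply p S v = (\<Sum>i\<le>degree p. fscale (coeff p i) ((S ^^ i) v))"

lemma poly_apply_lessThan:
  assumes "degree p < B"
  shows "poly_apply p S v = (\<Sum>i<B. fscale (coeff p i) ((S ^^ i) v))"
proof -
  have "(\<Sum>i<B. fscale (coeff p i) ((S ^^ i) v)) = poly_apply p S v"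
    unfolding poly_apply_def
    by (rule sum.mono_neutral_right) (use assms in \<open>auto simp: coeff_eq_0\<close>)
  then show ?thesis by simp
qed

lemma poly_apply_0 [simp]: "poly_apply 0 S v = 0"
  by (simp add: poly_apply_def)

lemma poly_apply_add: "poly_apply (p + q) S v = poly_apply p S v + poly_apply q S v"
proof -
  define B where "B = Suc (max (degree p) (degree q))"
  have "degree (p + q) < B" "degree p < B" "degree q < B"
    using degree_add_le_max[of p q] by (auto simp: B_def)
  then show ?thesis by (simp add: poly_apply_lessThan fs.scale_left_distrib sum.distrib)
qed

lemma poly_apply_diff: "poly_apply (p - q) S v = poly_apply p S v - poly_apply q S v"
  using poly_apply_add[of "p - q" q S v] by (simp add: eq_diff_eq)

lemma poly_apply_sum: "poly_apply (\<Sum>i\<in>A. f i) S v = (\<Sum>i\<in>A. poly_apply (f i) S v)"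
  by (induction A rule: infinite_finite_induct) (auto simp: poly_apply_add)

lemma poly_apply_smult: "poly_apply (smult a p) S v = fscale a (poly_apply p S v)"
proof -
  have "degree (smult a p) < Suc (degree p)" by (simp add: le_imp_less_Suc)
  then show ?thesis
    by (simp add: poly_apply_lessThan poly_apply_def lessThan_Suc_atMost[symmetric] fs.scale_sum_right
        del: sum.lessThan_Suc)
qed

lemma poly_apply_monom: "poly_apply (monom a k) S v = fscale a ((S ^^ k) v)"
proof -
  have "degree (monom a k) < Suc k" by (simp add: degree_monom_le le_imp_less_Suc)
  then have "poly_apply (monom a k) S v = (\<Sum>i<Suc k. fscale (coeff (monom a k) i) ((S ^^ i) v))"
    by (rule poly_apply_lessThan)
  also have "\<dots> = (\<Sum>i<Suc k. if i = k then fscale a ((S ^^ i) v) else 0)"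
    by (intro sum.cong) (auto simp: coeff_monom)
  finally show ?thesis by simp
qed

lemma poly_apply_pCons:
  assumes "fs_linear S"
  shows "poly_apply (pCons a p) S v = fscale a v + S (poly_apply p S v)"
proof -
  have "degree (pCons a p) < Suc (Suc (degree p))" by (simp add: le_imp_less_Suc)
  then have "poly_apply (pCons a p) S v
      = fscale a v + (\<Sum>i<Suc (degree p). fscale (coeff p i) ((S ^^ Suc i) v))"
    by (simp only: poly_apply_lessThan sum.lessThan_Suc_shift) simp
  also have "\<dots> = fscale a v + S (poly_apply p S v)"
    by (simp add: poly_apply_def lessThan_Suc_atMost[symmetric] fsp.linear_sum[OF assms]
        fsp.linear_scale[OF assms] del: sum.lessThan_Suc)
  finally show ?thesis .
qed

lemma poly_apply_mult:
  assumes "fs_linear S"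
  shows "poly_apply (p * q) S v = poly_apply p S (poly_apply q S v)"
proof (induction p)
  case (pCons a p)
  have "pCons a p * q = smult a q + pCons 0 (p * q)" by simp
  then show ?case
    by (simp only: poly_apply_add poly_apply_smult poly_apply_pCons[OF assms] pCons.IH) simp
qed simp

lemma poly_apply_in_subspace:
  assumes "fs.subspace D" and "\<And>x. x \<in> D \<Longrightarrow> S x \<in> D" and "d \<in> D"
  shows "poly_apply p S d \<in> D"
proof -
  have "(S ^^ i) d \<in> D" for i by (induction i) (simp_all add: assms)
  then show ?thesis unfolding poly_apply_def
    by (intro fs.subspace_sum[OF assms(1)] fs.subspace_scale[OF assms(1)])
qed

lemma X_power_mult_X_minus_1: "[:0,1:] ^ k * [:-1,1:] = monom (1::'a::field) (Suc k) - monom 1 k"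
proof -
  have "[:-1,1:] = [:0,1::'a:] - 1" by (simp add: one_pCons)
  then show ?thesis by (simp add: algebra_simps monom_altdef)
qed

lemma coeff_monom_minus_sum_monom:
  "coeff (monom 1 m - (\<Sum>i<m. monom (a i) i)) k = (if k = m then 1 else 0) - (if k < m then a k else 0)"
  by (simp add: coeff_sum coeff_monom)

lemma degree_monom_minus_sum_monom:
  fixes a :: "nat \<Rightarrow> 'a::field"
  shows "degree (monom 1 m - (\<Sum>i<m. monom (a i) i)) = m"
proof (rule antisym)
  show "degree (monom 1 m - (\<Sum>i<m. monom (a i) i)) \<le> m"
    by (rule degree_le) (simp add: coeff_sum coeff_monom)
  show "m \<le> degree (monom 1 m - (\<Sum>i<m. monom (a i) i))"
    by (rule le_degree) (simp add: coeff_sum coeff_monom)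
qed

lemma dvd_X_power_mult_imp_dvd:
  fixes p g :: "'a::field poly"
  assumes "poly p 0 \<noteq> 0" and "p dvd [:0,1:] ^ K * g"
  shows "p dvd g"
  using assms(2)
proof (induction K)
  case (Suc K)
  have "p dvd [:0,1:] * ([:0,1:] ^ K * g)" using Suc.prems by (simp only: power_Suc mult.assoc)
  then obtain h where h: "[:0,1:] * ([:0,1:] ^ K * g) = p * h" by (elim dvdE)
  have "poly p 0 * poly h 0 = 0" using arg_cong[OF h, of "\<lambda>q. poly q 0"] by simp
  then have "poly h 0 = 0" using assms(1) by simp
  then obtain h' where "h = [:0,1:] * h'" using poly_eq_0_iff_dvd[of h 0] by (auto elim: dvdE)
  with h have "[:0,1:] ^ K * g = p * h'" by (simp add: ac_simps)
  then show ?case using Suc.IH by simp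
qed simp

lemma monic_dvd_X_power_mult_X_minus_1:
  fixes p :: "'a::field poly"
  assumes "lead_coeff p = 1" and "degree p = m" and "1 \<le> m" and "p dvd [:0,1:] ^ K * [:-1,1:]"
  shows "p = [:0,1:] ^ m \<or> p = [:0,1:] ^ (m - 1) * [:-1,1:]"
proof -
  have "p \<noteq> 0" using assms(1) by auto
  define k where "k = order 0 p"
  obtain p' where p: "p = [:0,1:] ^ k * p'" and X_ndvd: "\<not> [:0,1:] dvd p'"
    using order_decomp[OF \<open>p \<noteq> 0\<close>, of 0] by (auto simp: k_def)
  have "p' dvd [:0,1:] ^ K * [:-1,1:]" using p assms(4) dvd_mult_right by metis
  moreover have "poly p' 0 \<noteq> 0" using X_ndvd poly_eq_0_iff_dvd[of p' 0] by simp
  ultimately have p'_dvd: "p' dvd [:-1,1:]" using dvd_X_power_mult_imp_dvd by blast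
  have "p' \<noteq> 0" using p \<open>p \<noteq> 0\<close> by auto
  have lc: "lead_coeff p' = 1"
    using assms(1) p by (simp add: lead_coeff_mult lead_coeff_power)
  have deg: "m = k + degree p'"
    using p \<open>p' \<noteq> 0\<close> assms(2) by (simp add: degree_mult_eq degree_linear_power[of 0, simplified])
  have "degree p' \<le> 1" using dvd_imp_degree_le[OF p'_dvd] by simp
  then consider "degree p' = 0" | "degree p' = 1" by linarith
  then show ?thesis
  proof cases
    case 1
    then have "p' = 1" using lc by (metis degree_0_id one_pCons)
    then show ?thesis using p deg 1 by simp
  next
    case 2
    obtain u where u: "[:-1,1:] = p' * u" using p'_dvd by (auto elim: dvdE)
    then have "u \<noteq> 0" by auto
    then have "degree u = 0" using arg_cong[OF u, of degree] degree_mult_eq[OF \<open>p' \<noteq> 0\<close>] 2 by simp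
    moreover have "lead_coeff u = 1" using arg_cong[OF u, of lead_coeff] lc by (simp add: lead_coeff_mult)
    ultimately have "u = 1" by (metis degree_0_id one_pCons)
    then show ?thesis using u p deg 2 by simp
  qed
qed

section \<open>Partial maps and matrices\<close>

definition unit_vec :: "nat \<Rightarrow> nat \<Rightarrow> 'a::zero_neq_one" where
  "unit_vec j = (\<lambda>k. if k = j then 1 else 0)"

definition semi_idempotent_op :: "(nat \<Rightarrow> 'a) set \<Rightarrow> ((nat \<Rightarrow> 'a) \<Rightarrow> (nat \<Rightarrow> 'a)) \<Rightarrow> bool" where
  "semi_idempotent_op V R \<longleftrightarrow> (\<exists>K. \<forall>v\<in>V. (R ^^ Suc K) v = (R ^^ K) v)"

lemma pdom_pair [simp]: "pdom (W, g) = W"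
  by (simp add: pdom_def)

lemma papp_pair [simp]: "papp (W, g) = g"
  by (simp add: papp_def)

lemma pim_pair [simp]: "pim (W, g) = g ` W"
  by (simp add: pim_def)

lemma ppow_total:
  assumes "\<And>v. v \<in> W \<Longrightarrow> R v \<in> W"
  shows "ppow W (W, R) k = (W, R ^^ k)"
proof (induction k)
  case (Suc k)
  have "(R ^^ k) v \<in> W" if "v \<in> W" for v using that assms by (induction k) auto
  then show ?case using Suc by (auto simp: pcomp_def)
qed (simp add: id_def)

lemma semi_idempotent_total_iff:
  assumes "\<And>v. v \<in> W \<Longrightarrow> R v \<in> W"
  shows "semi_idempotent W (W, R) \<longleftrightarrow> semi_idempotent_op W R"
proof -
  have "(R ^^ k) v \<in> W" if "v \<in> W" for v k using that assms by (induction k) auto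
  then show ?thesis by (auto simp: semi_idempotent_def semi_idempotent_op_def ppow_total[OF assms])
qed

lemma srk_total:
  assumes "\<And>v. v \<in> W \<Longrightarrow> R v \<in> W"
  shows "srk W (W, R) = (THE d. \<exists>J. \<forall>j\<ge>J. vdim ((R ^^ j) ` W) = d)"
  by (simp add: srk_def ppow_total[OF assms])

lemma matop_eq_pair: "matop n A = (Vsp n, papp (matop n A))"
  by (simp add: matop_def papp_def)

lemma linear_matop: "fs_linear (papp (matop n A))"
  by (rule fs_linearI)
    (simp_all add: matop_def papp_def fun_eq_iff vec_apply_simps sum.distrib sum_distrib_left algebra_simps)

lemma matop_in_Vsp: "papp (matop n A) v \<in> Vsp n"
  by (simp add: matop_def papp_def Vsp_def)

lemma matop_unit_vec: "A \<in> mats n \<Longrightarrow> j < n \<Longrightarrow> papp (matop n A) (unit_vec j) i = A i j"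
  by (auto simp: matop_def papp_def unit_vec_def mats_def if_distrib cong: if_cong)

lemma mats_eqI:
  assumes "A \<in> mats n" and "B \<in> mats n"
    and "\<And>j. j < n \<Longrightarrow> papp (matop n A) (unit_vec j) = papp (matop n B) (unit_vec j)"
  shows "A = B"
proof (intro ext)
  fix i j
  show "A i j = B i j"
  proof (cases "i < n \<and> j < n")
    case True
    then show ?thesis
      using matop_unit_vec[OF assms(1), where j=j and i=i] matop_unit_vec[OF assms(2), where j=j and i=i]
        assms(3)[of j] by simp
  qed (use assms(1,2) in \<open>auto simp: mats_def\<close>)
qed

lemma unit_vec_in_Vsp: "j < n \<Longrightarrow> unit_vec j \<in> Vsp n"
  by (simp add: unit_vec_def Vsp_def)

lemma Vsp_eq_sum_unit_vec:
  assumes "v \<in> Vsp n"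
  shows "v = (\<Sum>j<n. fscale (v j) (unit_vec j))"
proof
  fix i
  have "(\<Sum>j<n. fscale (v j) (unit_vec j)) i = (\<Sum>j<n. if i = j then v j else 0)"
    unfolding vec_apply_simps unit_vec_def by (intro sum.cong) auto
  then show "v i = (\<Sum>j<n. fscale (v j) (unit_vec j)) i"
    using assms by (simp add: Vsp_def)
qed

lemma sum_over_direct_sum:
  assumes "bij_betw (\<lambda>(x, y). x + y) (X \<times> Y) D" and "finite X" and "finite Y"
    and "\<And>x y. x \<in> X \<Longrightarrow> y \<in> Y \<Longrightarrow> g (x + y) = g y"
  shows "sum g D = of_nat (card X) * sum g Y"
proof -
  have "sum g D = (\<Sum>(x, y)\<in>X \<times> Y. g (x + y))"
    using sum.reindex_bij_betw[OF assms(1), of g] by (simp add: case_prod_beta)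
  also have "\<dots> = (\<Sum>x\<in>X. \<Sum>y\<in>Y. g y)"
    using assms(4) by (simp add: sum.cartesian_product[symmetric])
  finally show ?thesis by simp
qed

lemma mu_Suc: "mu q (Suc s) = - (q ^ s * mu q s)"
proof -
  have "Suc s choose 2 = s + (s choose 2)" by (simp add: numeral_2_eq_2)
  then show ?thesis by (simp add: mu_def power_add)
qed

section \<open>Extensions of a semi-idempotent partial map\<close>

locale extension_setting =
  fixes T :: "(nat \<Rightarrow> 'a::{finite,field}) \<Rightarrow> (nat \<Rightarrow> 'a)" and n :: nat
  assumes n_pos: "n \<ge> 1"
    and linear_on_T: "linear_on (Vsp (n - 1)) T"
    and T_into_V: "\<forall>x \<in> Vsp (n - 1). T x \<in> Vsp n"
    and semi_idempotent_T: "semi_idempotent (Vsp n) (Vsp (n - 1), T)"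
    and T_not_into_H: "\<not> T ` Vsp (n - 1) \<subseteq> Vsp (n - 1)"
begin

abbreviation V :: "(nat \<Rightarrow> 'a) set" where "V \<equiv> Vsp n"
abbreviation H :: "(nat \<Rightarrow> 'a) set" where "H \<equiv> Vsp (n - 1)"

definition trunc :: "(nat \<Rightarrow> 'a) \<Rightarrow> (nat \<Rightarrow> 'a)" where
  "trunc x = (\<lambda>i. if i < n - 1 then x i else 0)"

definition T0 :: "(nat \<Rightarrow> 'a) \<Rightarrow> (nat \<Rightarrow> 'a)" where
  "T0 x = T (trunc x)"

lemma H_subset_V: "H \<subseteq> V"
  using n_pos by (auto simp: Vsp_def)

lemma in_H_iff:
  assumes "x \<in> V"
  shows "x \<in> H \<longleftrightarrow> x (n - 1) = 0"
proof -
  have "i \<ge> n - 1 \<longleftrightarrow> i = n - 1 \<or> i \<ge> n" for i using n_pos by linarith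
  then show ?thesis using assms by (auto simp: Vsp_def)
qed

lemma trunc_in_H: "trunc x \<in> H"
  by (simp add: trunc_def Vsp_def)

lemma trunc_id: "x \<in> H \<Longrightarrow> trunc x = x"
  by (auto simp: trunc_def Vsp_def fun_eq_iff)

lemma linear_T0: "fs_linear T0"
proof -
  have "trunc (x + y) = trunc x + trunc y" "trunc (fscale c x) = fscale c (trunc x)" for x y c
    by (simp_all add: trunc_def fun_eq_iff vec_apply_simps)
  then show ?thesis
    using linear_on_T trunc_in_H by (intro fs_linearI) (simp_all add: T0_def linear_on_def)
qed

lemma T0_in_V: "T0 x \<in> V"
  using T_into_V trunc_in_H by (simp add: T0_def)

lemma T0_pow_in_V: "x \<in> V \<Longrightarrow> (T0 ^^ k) x \<in> V"
  by (cases k) (auto simp: T0_in_V)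

lemma T0_eq_T: "x \<in> H \<Longrightarrow> T0 x = T x"
  by (simp add: T0_def trunc_id)

definition dom_pow :: "nat \<Rightarrow> (nat \<Rightarrow> 'a) set" where
  "dom_pow k = {x \<in> V. \<forall>i<k. (T0 ^^ i) x \<in> H}"

lemma dom_pow_Suc: "x \<in> dom_pow (Suc k) \<longleftrightarrow> x \<in> dom_pow k \<and> (T0 ^^ k) x \<in> H"
  by (auto simp: dom_pow_def less_Suc_eq)

lemma dom_pow_antimono: "k \<le> k' \<Longrightarrow> dom_pow k' \<subseteq> dom_pow k"
  by (auto simp: dom_pow_def)

lemma subspace_dom_pow: "fs.subspace (dom_pow k)"
  using subspace_Vsp[of n] subspace_Vsp[of "n - 1"] linear_funpow[OF linear_T0]
  by (auto simp: fs.subspace_def dom_pow_def fsp.linear_0 fsp.linear_add fsp.linear_scale)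

lemma ppow_T:
  "pdom (ppow V (H, T) k) = dom_pow k \<and> (\<forall>x\<in>dom_pow k. papp (ppow V (H, T) k) x = (T0 ^^ k) x)"
proof (induction k)
  case 0
  then show ?case by (simp add: dom_pow_def)
next
  case (Suc k)
  have "pdom (ppow V (H, T) (Suc k)) = {x \<in> pdom (ppow V (H, T) k). papp (ppow V (H, T) k) x \<in> H}"
    by (simp add: pcomp_def)
  also have "\<dots> = dom_pow (Suc k)"
    using Suc.IH by (auto simp: dom_pow_Suc)
  moreover have "papp (ppow V (H, T) (Suc k)) x = (T0 ^^ Suc k) x" if "x \<in> dom_pow (Suc k)" for x
    using Suc.IH that by (simp add: pcomp_def dom_pow_Suc T0_eq_T)
  ultimately show ?case by blast
qed

definition D :: "(nat \<Rightarrow> 'a) set" where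
  "D = {x \<in> V. \<forall>i. (T0 ^^ i) x \<in> H}"

definition N :: nat where
  "N = (SOME N. \<forall>x\<in>dom_pow N. (T0 ^^ N) x \<in> H \<and> T0 ((T0 ^^ N) x) = (T0 ^^ N) x)"

lemma N_semi_idempotent: "\<forall>x\<in>dom_pow N. (T0 ^^ N) x \<in> H \<and> T0 ((T0 ^^ N) x) = (T0 ^^ N) x"
proof -
  obtain K where K: "\<forall>x \<in> pim (ppow V (H, T) K). x \<in> H \<and> T x = x"
    using semi_idempotent_T by (auto simp: semi_idempotent_def)
  have "\<forall>x\<in>dom_pow K. (T0 ^^ K) x \<in> H \<and> T0 ((T0 ^^ K) x) = (T0 ^^ K) x"
  proof
    fix x assume x: "x \<in> dom_pow K"
    have "(T0 ^^ K) x \<in> pim (ppow V (H, T) K)"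
      unfolding pim_def using ppow_T[of K] x by (intro image_eqI[of _ _ x]) simp_all
    with K have "(T0 ^^ K) x \<in> H \<and> T ((T0 ^^ K) x) = (T0 ^^ K) x" by blast
    then show "(T0 ^^ K) x \<in> H \<and> T0 ((T0 ^^ K) x) = (T0 ^^ K) x"
      using T0_eq_T by simp
  qed
  then have "\<exists>K. \<forall>x\<in>dom_pow K. (T0 ^^ K) x \<in> H \<and> T0 ((T0 ^^ K) x) = (T0 ^^ K) x" by blast
  from someI_ex[OF this] show ?thesis unfolding N_def .
qed

lemma T0_pow_stable:
  assumes "x \<in> dom_pow N" and "N \<le> j"
  shows "(T0 ^^ j) x = (T0 ^^ N) x"
  using assms(2) by (induction j rule: dec_induct) (use N_semi_idempotent assms(1) in auto)

lemma D_subset_dom_pow: "D \<subseteq> dom_pow k"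
  by (auto simp: D_def dom_pow_def)

lemma dom_pow_ge_N: "k \<ge> N \<Longrightarrow> dom_pow k = D"
proof
  assume k: "k \<ge> N"
  show "dom_pow k \<subseteq> D"
  proof
    fix x assume "x \<in> dom_pow k"
    then have x: "x \<in> dom_pow N" using dom_pow_antimono[OF k] by blast
    have "(T0 ^^ i) x \<in> H" for i
    proof (cases "i < N")
      case False
      then show ?thesis using x N_semi_idempotent T0_pow_stable[OF x, of i] by simp
    qed (use x in \<open>simp add: dom_pow_def\<close>)
    then show "x \<in> D" using x by (simp add: D_def dom_pow_def)
  qed
qed (rule D_subset_dom_pow)

lemma D_subset_H: "D \<subseteq> H"
proof
  fix x assume "x \<in> D"
  then have "(T0 ^^ 0) x \<in> H" unfolding D_def by blast
  then show "x \<in> H" by simp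
qed

lemma D_subset_V: "D \<subseteq> V"
  by (auto simp: D_def)

lemma subspace_D: "fs.subspace D"
  using subspace_dom_pow[of N] dom_pow_ge_N[of N] by simp

lemma finite_D: "finite D"
  using finite_Vsp D_subset_V by (rule finite_subset[rotated])

lemma T0_in_D:
  assumes "x \<in> D"
  shows "T0 x \<in> D"
proof -
  have "(T0 ^^ i) (T0 x) = (T0 ^^ Suc i) x" for i
    by (simp add: funpow_Suc_right del: funpow.simps)
  then show ?thesis using assms T0_in_V by (auto simp: D_def simp del: funpow.simps)
qed

lemma T0_pow_in_D: "x \<in> D \<Longrightarrow> (T0 ^^ k) x \<in> D"
  by (induction k) (auto simp: T0_in_D)

lemma T0_pow_stable_D: "x \<in> D \<Longrightarrow> j \<ge> N \<Longrightarrow> (T0 ^^ j) x = (T0 ^^ N) x"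
  using T0_pow_stable dom_pow_ge_N by blast

definition X :: "(nat \<Rightarrow> 'a) set" where "X = (T0 ^^ N) ` D"
definition Y :: "(nat \<Rightarrow> 'a) set" where "Y = {d \<in> D. (T0 ^^ N) d = 0}"

lemma X_subset_D: "X \<subseteq> D"
  by (auto simp: X_def T0_pow_in_D)

lemma Y_subset_D: "Y \<subseteq> D"
  by (auto simp: Y_def)

lemma T0_fixes_X:
  assumes "x \<in> X"
  shows "T0 x = x"
proof -
  obtain d where "d \<in> D" and "x = (T0 ^^ N) d" using assms by (auto simp: X_def)
  then show ?thesis using N_semi_idempotent dom_pow_ge_N[of N] by simp
qed

lemma T0_pow_fixes_X: "x \<in> X \<Longrightarrow> (T0 ^^ k) x = x"
  by (induction k) (auto simp: T0_fixes_X)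

lemma subspace_X: "fs.subspace X"
  unfolding X_def by (rule fsp.linear_subspace_image[OF linear_funpow[OF linear_T0] subspace_D])

lemma finite_X: "finite X"
  using finite_D X_subset_D by (rule finite_subset[rotated])

lemma finite_Y: "finite Y"
  using finite_D Y_subset_D by (rule finite_subset[rotated])

lemma bij_X_times_Y_D: "bij_betw (\<lambda>(x, y). x + y) (X \<times> Y) D"
  unfolding X_def Y_def
proof (rule fs.image_kernel_decomposition[OF linear_funpow[OF linear_T0] subspace_D T0_pow_in_D])
  fix x assume "x \<in> D"
  then show "(T0 ^^ N) ((T0 ^^ N) x) = (T0 ^^ N) x"
    using T0_pow_fixes_X[of "(T0 ^^ N) x" N] by (simp add: X_def)
qed

definition m :: nat where "m = (LEAST k. dom_pow k = D)"

definition e :: "nat \<Rightarrow> 'a" where "e = (SOME e. e \<in> dom_pow (m - 1) \<and> e \<notin> D)"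

definition chain :: "nat \<Rightarrow> nat \<Rightarrow> 'a" where "chain i = (T0 ^^ i) e"

definition c :: 'a where "c = chain (m - 1) (n - 1)"

lemma dom_pow_m: "dom_pow m = D"
  unfolding m_def by (rule LeastI[of _ N]) (simp add: dom_pow_ge_N)

lemma dom_pow_1: "dom_pow 1 = H"
  using H_subset_V by (auto simp: dom_pow_def)

lemma D_ne_H: "D \<noteq> H"
proof
  assume DH: "D = H"
  have "T x \<in> H" if "x \<in> H" for x
    using T0_in_D[of x] T0_eq_T[of x] that DH by simp
  then show False using T_not_into_H by blast
qed

lemma m_ge_2: "m \<ge> 2"
proof -
  have "unit_vec (n - 1) \<in> V - H"
    using n_pos by (auto simp: unit_vec_def Vsp_def)
  then have "m \<noteq> 0" using dom_pow_m D_subset_H by (auto simp: dom_pow_def)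
  moreover have "m \<noteq> 1" using dom_pow_m dom_pow_1 D_ne_H by auto
  ultimately show ?thesis by linarith
qed

lemma e_in_dom_pow: "e \<in> dom_pow (m - 1)" and e_notin_D: "e \<notin> D"
proof -
  have "dom_pow (m - 1) \<noteq> D"
    using m_ge_2 Least_le[of "\<lambda>k. dom_pow k = D" "m - 1"] by (auto simp flip: m_def)
  then have "\<exists>e. e \<in> dom_pow (m - 1) \<and> e \<notin> D" using D_subset_dom_pow by blast
  from someI_ex[OF this] show "e \<in> dom_pow (m - 1)" "e \<notin> D" unfolding e_def by simp_all
qed

lemma chain_in_V: "chain i \<in> V"
  using e_in_dom_pow T0_pow_in_V by (simp add: chain_def dom_pow_def)

lemma chain_in_H: "i < m - 1 \<Longrightarrow> chain i \<in> H"
  using e_in_dom_pow by (simp add: chain_def dom_pow_def)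

lemma chain_notin_H: "chain (m - 1) \<notin> H"
proof
  assume "chain (m - 1) \<in> H"
  then have "e \<in> dom_pow (Suc (m - 1))" using e_in_dom_pow by (simp add: dom_pow_Suc chain_def)
  then show False using e_notin_D dom_pow_m m_ge_2 by (simp add: Suc_diff_1)
qed

lemma chain_notin_D: "chain (m - 1) \<notin> D"
  using chain_notin_H D_subset_H by blast

lemma T0_pow_chain: "(T0 ^^ j) (chain i) = chain (j + i)"
  by (simp add: chain_def funpow_add)

lemma T0_chain: "T0 (chain i) = chain (Suc i)"
  using T0_pow_chain[of 1 i] by simp

lemma c_nonzero: "c \<noteq> 0"
  using chain_notin_H in_H_iff[OF chain_in_V] by (simp add: c_def)

lemma chain_in_dom_pow: "i \<le> m - 1 \<Longrightarrow> chain i \<in> dom_pow (m - 1 - i)"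
  using chain_in_V chain_in_H by (auto simp: dom_pow_def T0_pow_chain)

lemma dom_pow_decomposition:
  "j \<le> m \<Longrightarrow> v \<in> dom_pow (m - j) \<Longrightarrow> \<exists>d\<in>D. \<exists>a. v = d + (\<Sum>i<j. fscale (a i) (chain i))"
proof (induction j arbitrary: v)
  case 0
  then show ?case using dom_pow_m by (intro bexI[of _ v]) auto
next
  case (Suc j)
  define k where "k = m - Suc j"
  have v: "v \<in> dom_pow k" using Suc.prems by (simp add: k_def)
  have kj: "k + j = m - 1" "Suc k = m - j" using Suc.prems by (simp_all add: k_def)
  define t where "t = (T0 ^^ k) v (n - 1) / c"
  define v' where "v' = v - fscale t (chain j)"
  have "chain j \<in> dom_pow k" using chain_in_dom_pow[of j] Suc.prems by (simp add: k_def)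
  then have v'_in: "v' \<in> dom_pow k"
    unfolding v'_def using subspace_dom_pow v by (simp add: fs.subspace_diff fs.subspace_scale)
  have "(T0 ^^ k) v' = (T0 ^^ k) v - fscale t (chain (m - 1))"
    unfolding v'_def using linear_funpow[OF linear_T0]
    by (simp add: fsp.linear_diff fsp.linear_scale T0_pow_chain kj)
  then have "(T0 ^^ k) v' (n - 1) = 0"
    using c_nonzero by (simp add: t_def c_def vec_apply_simps)
  then have "(T0 ^^ k) v' \<in> H" using in_H_iff v'_in T0_pow_in_V by (simp add: dom_pow_def)
  then have "v' \<in> dom_pow (m - j)" using v'_in dom_pow_Suc kj by metis
  then obtain d a where d: "d \<in> D" "v' = d + (\<Sum>i<j. fscale (a i) (chain i))"
    using Suc.IH Suc.prems by fastforce
  then have "v = d + (\<Sum>i<Suc j. fscale ((a(j := t)) i) (chain i))"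
    by (simp add: v'_def algebra_simps)
  then show ?case using d by blast
qed

lemma V_decomposition: "v \<in> V \<Longrightarrow> \<exists>d\<in>D. \<exists>a. v = d + (\<Sum>i<m. fscale (a i) (chain i))"
  using dom_pow_decomposition[of m v] by (simp add: dom_pow_def)

lemma last_coord_T0_pow_chain_combination:
  assumes "j < m" and "\<And>i. j < i \<Longrightarrow> i < m \<Longrightarrow> a i = 0"
  shows "(T0 ^^ (m - 1 - j)) (\<Sum>i<m. fscale (a i) (chain i)) (n - 1) = a j * c"
proof -
  have "(T0 ^^ (m - 1 - j)) (\<Sum>i<m. fscale (a i) (chain i)) (n - 1)
      = (\<Sum>i<m. a i * chain (m - 1 - j + i) (n - 1))"
    using linear_funpow[OF linear_T0]
    by (simp add: fsp.linear_sum fsp.linear_scale T0_pow_chain vec_apply_simps)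
  also have "\<dots> = a j * chain (m - 1 - j + j) (n - 1)
      + (\<Sum>i\<in>{..<m} - {j}. a i * chain (m - 1 - j + i) (n - 1))"
    using assms(1) by (simp add: sum.remove)
  also have "(\<Sum>i\<in>{..<m} - {j}. a i * chain (m - 1 - j + i) (n - 1)) = 0"
  proof (rule sum.neutral, rule ballI)
    fix i assume "i \<in> {..<m} - {j}"
    then have "i < m" "i \<noteq> j" by auto
    then consider "i < j" | "j < i" by linarith
    then show "a i * chain (m - 1 - j + i) (n - 1) = 0"
    proof cases
      case 1
      then have "chain (m - 1 - j + i) \<in> H" using assms chain_in_H by simp
      then show ?thesis using in_H_iff chain_in_V by simp
    qed (simp add: assms \<open>i < m\<close>)
  qed
  finally show ?thesis using assms by (simp add: c_def)
qed

lemma chain_combination_in_D_imp_zero: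
  assumes "(\<Sum>i<m. fscale (a i) (chain i)) \<in> D"
  shows "\<forall>i<m. a i = 0"
proof (rule ccontr)
  assume "\<not> (\<forall>i<m. a i = 0)"
  then have ne: "{i. i < m \<and> a i \<noteq> 0} \<noteq> {}" by auto
  define j where "j = Max {i. i < m \<and> a i \<noteq> 0}"
  have j: "j < m" "a j \<noteq> 0" using Max_in[OF _ ne] by (auto simp: j_def)
  have "a i = 0" if "j < i" "i < m" for i
    using Max_ge[of "{i. i < m \<and> a i \<noteq> 0}" i] that by (fastforce simp: j_def)
  then have "(T0 ^^ (m - 1 - j)) (\<Sum>i<m. fscale (a i) (chain i)) (n - 1) = a j * c"
    using last_coord_T0_pow_chain_combination j(1) by blast
  moreover have "(T0 ^^ (m - 1 - j)) (\<Sum>i<m. fscale (a i) (chain i)) \<in> D"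
    using assms T0_pow_in_D by blast
  ultimately show False
    using j(2) c_nonzero D_subset_H by (force simp: Vsp_def)
qed

lemma linear_map_into_subspace_on_V:
  assumes "fs_linear R" and "fs.subspace W" and "\<And>d. d \<in> D \<Longrightarrow> R d \<in> W"
    and "\<And>i. i < m \<Longrightarrow> R (chain i) \<in> W" and "v \<in> V"
  shows "R v \<in> W"
proof -
  obtain d a where "d \<in> D" and v: "v = d + (\<Sum>i<m. fscale (a i) (chain i))"
    using V_decomposition[OF assms(5)] by blast
  moreover have "(\<Sum>i<m. fscale (a i) (R (chain i))) \<in> W"
    using assms by (intro fs.subspace_sum fs.subspace_scale) auto
  ultimately show ?thesis using assms
    by (simp add: v fsp.linear_add fsp.linear_sum fsp.linear_scale fs.subspace_add)
qed

lemma linear_maps_agree_on_V: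
  assumes "fs_linear R" and "fs_linear R'" and "\<And>d. d \<in> D \<Longrightarrow> R d = R' d"
    and "\<And>i. i < m \<Longrightarrow> R (chain i) = R' (chain i)" and "v \<in> V"
  shows "R v = R' v"
proof -
  obtain d a where "d \<in> D" and v: "v = d + (\<Sum>i<m. fscale (a i) (chain i))"
    using V_decomposition[OF assms(5)] by blast
  then show ?thesis using assms by (simp add: v fsp.linear_add fsp.linear_sum fsp.linear_scale)
qed

text \<open>The extension of \<open>T\<close> sending \<open>chain (m - 1)\<close>, whose last coordinate is \<open>c\<close>, to \<open>y\<close>.\<close>
definition S :: "(nat \<Rightarrow> 'a) \<Rightarrow> (nat \<Rightarrow> 'a) \<Rightarrow> (nat \<Rightarrow> 'a)" where
  "S y v = T0 v + fscale (v (n - 1) / c) (y - T0 (chain (m - 1)))"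

lemma linear_S: "fs_linear (S y)"
proof (rule fs_linearI)
  fix u v :: "nat \<Rightarrow> 'a" and a :: 'a
  have "(u + v) (n - 1) = u (n - 1) + v (n - 1)" by (simp add: plus_fun_apply)
  then show "S y (u + v) = S y u + S y v"
    by (simp add: S_def fsp.linear_add[OF linear_T0] add_divide_distrib fs.scale_left_distrib)
  have "fscale a v (n - 1) = a * v (n - 1)" by (simp add: fscale_def)
  then show "S y (fscale a v) = fscale a (S y v)"
    by (simp add: S_def fsp.linear_scale[OF linear_T0] fs.scale_right_distrib)
qed

lemma linear_S_pow: "fs_linear (S y ^^ k)"
  by (rule linear_funpow[OF linear_S])

lemma S_in_V: "y \<in> V \<Longrightarrow> S y v \<in> V"
  unfolding S_def using subspace_Vsp T0_in_V
  by (intro fs.subspace_add fs.subspace_scale fs.subspace_diff) auto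

lemma S_pow_in_V: "y \<in> V \<Longrightarrow> v \<in> V \<Longrightarrow> (S y ^^ k) v \<in> V"
  by (cases k) (auto simp: S_in_V)

lemma S_eq_T0: "x \<in> H \<Longrightarrow> S y x = T0 x"
  by (simp add: S_def Vsp_def)

lemma S_chain_last: "S y (chain (m - 1)) = y"
proof -
  have "chain (m - 1) (n - 1) / c = 1" using c_nonzero by (simp add: c_def)
  then show ?thesis by (simp add: S_def)
qed

lemma S_pow_eq_T0_pow: "d \<in> D \<Longrightarrow> (S y ^^ k) d = (T0 ^^ k) d"
proof (induction k)
  case (Suc k)
  then have "(T0 ^^ k) d \<in> H" using T0_pow_in_D D_subset_H by blast
  then show ?case using Suc by (simp add: S_eq_T0)
qed simp

lemma S_in_D: "d \<in> D \<Longrightarrow> S y d \<in> D"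
  using S_eq_T0 D_subset_H T0_in_D by auto

lemma S_pow_e: "i \<le> m - 1 \<Longrightarrow> (S y ^^ i) e = chain i"
proof (induction i)
  case (Suc i)
  then show ?case using chain_in_H[of i] by (simp add: S_eq_T0 T0_chain)
qed (simp add: chain_def)

lemma S_pow_m_e: "(S y ^^ m) e = y"
proof -
  have "(S y ^^ m) e = S y ((S y ^^ (m - 1)) e)"
    using m_ge_2 by (metis Suc_diff_1 funpow.simps(2) comp_apply zero_less_numeral less_le_trans)
  then show ?thesis using S_pow_e[of "m - 1"] S_chain_last by simp
qed

lemma S_pow_ge_m_e: "j \<ge> m \<Longrightarrow> (S y ^^ j) e = (S y ^^ (j - m)) y"
  using S_pow_m_e funpow_add[of "j - m" m "S y"] by simp

lemma S_pow_chain: "i < m \<Longrightarrow> (S y ^^ k) (chain i) = (S y ^^ (k + i)) e"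
  using S_pow_e[of i y] by (simp add: funpow_add)

definition E :: "(nat \<Rightarrow> 'a) set" where "E = (\<lambda>d. d + chain (m - 1)) ` Y"

lemma in_E_iff: "y \<in> E \<longleftrightarrow> y - chain (m - 1) \<in> Y"
  by (auto simp: E_def image_iff) (metis diff_add_cancel)

lemma S_pow_chain_eventually_D:
  assumes "y \<in> D" and "j \<ge> N + m" and "i < m"
  shows "(S y ^^ j) (chain i) = (T0 ^^ N) y"
proof -
  have "(S y ^^ j) (chain i) = (S y ^^ (j + i)) e" using S_pow_chain[OF assms(3)] .
  also have "\<dots> = (S y ^^ (j + i - m)) y" by (rule S_pow_ge_m_e) (use assms(2) in simp)
  also have "\<dots> = (T0 ^^ (j + i - m)) y" using S_pow_eq_T0_pow[OF assms(1)] .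
  also have "\<dots> = (T0 ^^ N) y" by (rule T0_pow_stable_D[OF assms(1)]) (use assms(2) in simp)
  finally show ?thesis .
qed

text \<open>For \<open>y \<in> E\<close> the orbit of \<open>e\<close> under \<open>S y\<close> becomes stationary: after \<open>m - 1 + t\<close> steps it is
  \<open>S y\<^sup>t\<close> applied to \<open>chain (m - 1)\<close>, after \<open>m + t\<close> steps \<open>S y\<^sup>t\<close> applied to \<open>y\<close>, and the
  difference \<open>T\<^sup>t (y - chain (m - 1))\<close> vanishes once \<open>t \<ge> N\<close>.\<close>
lemma S_pow_e_eventually_E:
  assumes y: "y \<in> E" and j: "j \<ge> N + m - 1"
  shows "(S y ^^ j) e = (S y ^^ (N + m - 1)) e"
  using j
proof (induction j rule: dec_induct)
  case (step j)
  define t where "t = j - (m - 1)"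
  have j: "j = m - 1 + t" "Suc j = t + m" "t \<ge> N" using step m_ge_2 by (auto simp: t_def)
  have d: "y - chain (m - 1) \<in> D" "(T0 ^^ N) (y - chain (m - 1)) = 0"
    using y by (auto simp: in_E_iff Y_def)
  have "(S y ^^ Suc j) e = (S y ^^ t) ((S y ^^ m) e)"
    by (simp only: j(2) funpow_add comp_apply)
  moreover have "(S y ^^ j) e = (S y ^^ t) ((S y ^^ (m - 1)) e)"
    by (simp only: j(1) add.commute[of "m - 1"] funpow_add comp_apply)
  ultimately have "(S y ^^ Suc j) e - (S y ^^ j) e = (S y ^^ t) y - (S y ^^ t) (chain (m - 1))"
    using S_pow_m_e S_pow_e[where i="m - 1" and y=y] by simp
  also have "\<dots> = (T0 ^^ t) (y - chain (m - 1))"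
    using S_pow_eq_T0_pow[OF d(1)] by (simp add: fsp.linear_diff[OF linear_S_pow])
  also have "\<dots> = 0" using T0_pow_stable_D[OF d(1) j(3)] d(2) by simp
  finally show ?case using step by simp
qed simp

lemma D_union_E_imp_semi_idempotent_S:
  assumes "y \<in> D \<union> E"
  shows "semi_idempotent_op V (S y)"
proof -
  define K where "K = N + m"
  have "(S y ^^ Suc K) v = (S y ^^ K) v" if v: "v \<in> V" for v
  proof (rule linear_maps_agree_on_V[OF linear_S_pow linear_S_pow _ _ v])
    fix d assume d: "d \<in> D"
    have "(T0 ^^ Suc K) d = (T0 ^^ N) d" "(T0 ^^ K) d = (T0 ^^ N) d"
      by (rule T0_pow_stable_D[OF d], simp add: K_def)+
    then show "(S y ^^ Suc K) d = (S y ^^ K) d"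
      using S_pow_eq_T0_pow[OF d] by (simp del: funpow.simps)
  next
    fix i assume i: "i < m"
    show "(S y ^^ Suc K) (chain i) = (S y ^^ K) (chain i)"
    proof (cases "y \<in> D")
      case True
      show ?thesis
        using S_pow_chain_eventually_D[OF True _ i, of K] S_pow_chain_eventually_D[OF True _ i, of "Suc K"]
        by (simp add: K_def del: funpow.simps)
    next
      case False
      then have "y \<in> E" using assms by blast
      then show ?thesis
        using S_pow_e_eventually_E[of y "Suc K + i"] S_pow_e_eventually_E[of y "K + i"]
        by (simp add: S_pow_chain[OF i] K_def del: funpow.simps)
    qed
  qed
  then show ?thesis by (auto simp: semi_idempotent_op_def)
qed

text \<open>The remainder of \<open>g\<close> modulo \<open>X\<^sup>m - \<Sum>\<^sub>i\<^sub><\<^sub>m a\<^sub>i X\<^sup>i\<close> has degree below \<open>m\<close>;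
  applied to \<open>e\<close> it yields a combination of the chain lying in \<open>D\<close>, which must be trivial.\<close>
lemma annihilator_dvd:
  assumes d: "d \<in> D" and y: "y = d + (\<Sum>i<m. fscale (a i) (chain i))"
    and g: "poly_apply g (S y) e = 0"
  shows "monom 1 m - (\<Sum>i<m. monom (a i) i) dvd g"
proof -
  define p where "p = monom 1 m - (\<Sum>i<m. monom (a i) i)"
  define r where "r = g mod p"
  have "p \<noteq> 0" using degree_monom_minus_sum_monom[of m a] m_ge_2 by (auto simp: p_def)
  have "poly_apply p (S y) e = (S y ^^ m) e - (\<Sum>i<m. fscale (a i) ((S y ^^ i) e))"
    by (simp add: p_def poly_apply_diff poly_apply_sum poly_apply_monom)
  also have "\<dots> = d" using S_pow_m_e S_pow_e y by simp
  finally have pd: "poly_apply p (S y) e = d" .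
  have "g = g div p * p + r" by (simp add: r_def)
  then have "poly_apply r (S y) e = - poly_apply (g div p) (S y) d"
    using g pd poly_apply_add poly_apply_mult[OF linear_S] by (metis add_eq_0_iff)
  then have rD: "poly_apply r (S y) e \<in> D"
    using poly_apply_in_subspace[OF subspace_D S_in_D d] fs.subspace_neg[OF subspace_D] by simp
  have "degree r < m"
    using degree_mod_less[OF \<open>p \<noteq> 0\<close>, of g] degree_monom_minus_sum_monom[of m a] m_ge_2
    by (auto simp: r_def p_def)
  then have "poly_apply r (S y) e = (\<Sum>i<m. fscale (coeff r i) (chain i))"
    using S_pow_e by (simp add: poly_apply_lessThan)
  then have "\<forall>i<m. coeff r i = 0" using chain_combination_in_D_imp_zero rD by simp
  then have "r = 0" using \<open>degree r < m\<close> by (metis leading_coeff_0_iff)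
  then show ?thesis by (simp add: r_def p_def dvd_eq_mod_eq_0)
qed

lemma semi_idempotent_S_orbit_e:
  assumes "semi_idempotent_op V (S y)"
  obtains K0 where "\<And>K. K \<ge> K0 \<Longrightarrow> (S y ^^ Suc K) e = (S y ^^ K) e"
proof -
  obtain K0 where K0: "\<forall>v\<in>V. (S y ^^ Suc K0) v = (S y ^^ K0) v"
    using assms by (auto simp: semi_idempotent_op_def)
  have "e \<in> V" using e_in_dom_pow by (simp add: dom_pow_def)
  then show ?thesis using that[of K0] funpow_Suc_eq_mono[OF K0] by blast
qed

lemma semi_idempotent_S_chain_coeffs:
  assumes si: "semi_idempotent_op V (S y)"
    and d: "d \<in> D" and yd: "y = d + (\<Sum>i<m. fscale (a i) (chain i))"
  shows "(\<forall>i<m. a i = 0) \<or> (\<forall>i<m. a i = (if i = m - 1 then 1 else 0))"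
proof -
  obtain K where K: "(S y ^^ Suc K) e = (S y ^^ K) e"
    using semi_idempotent_S_orbit_e[OF si] by blast
  define p where "p = monom 1 m - (\<Sum>i<m. monom (a i) i)"
  have "poly_apply ([:0,1:] ^ K * [:-1,1:]) (S y) e = 0"
    unfolding X_power_mult_X_minus_1 using K
    by (simp add: poly_apply_diff poly_apply_monom del: funpow.simps)
  then have dvd: "p dvd [:0,1:] ^ K * [:-1,1:]"
    unfolding p_def by (rule annihilator_dvd[OF d yd])
  have lc: "lead_coeff p = 1" and deg: "degree p = m"
    using degree_monom_minus_sum_monom[of m a] by (simp_all add: p_def coeff_sum coeff_monom)
  have "1 \<le> m" using m_ge_2 by simp
  from monic_dvd_X_power_mult_X_minus_1[OF lc deg this dvd]
  have "p = [:0,1:] ^ m \<or> p = [:0,1:] ^ (m - 1) * [:-1,1:]" .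
  moreover have "Suc (m - 1) = m" using m_ge_2 by simp
  ultimately have "p = monom 1 m \<or> p = monom 1 m - monom 1 (m - 1)"
    using X_power_mult_X_minus_1[of "m - 1"] by (metis monom_altdef smult_1_left)
  moreover have coeff_p: "coeff p k = (if k = m then 1 else 0) - (if k < m then a k else 0)" for k
    unfolding p_def by (rule coeff_monom_minus_sum_monom)
  ultimately show ?thesis
  proof (elim disjE)
    assume "p = monom 1 m"
    then have "a i = 0" if "i < m" for i using that coeff_p[of i] by (simp add: coeff_monom)
    then show ?thesis by blast
  next
    assume "p = monom 1 m - monom 1 (m - 1)"
    then have "a i = (if i = m - 1 then 1 else 0)" if "i < m" for i
      using that coeff_p[of i] by (auto simp: coeff_monom)
    then show ?thesis by blast
  qed
qed

lemma semi_idempotent_S_imp_D_union_E: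
  assumes y: "y \<in> V" and si: "semi_idempotent_op V (S y)"
  shows "y \<in> D \<union> E"
proof -
  obtain d a where d: "d \<in> D" and yd: "y = d + (\<Sum>i<m. fscale (a i) (chain i))"
    using V_decomposition[OF y] by blast
  from semi_idempotent_S_chain_coeffs[OF si d yd] show ?thesis
  proof
    assume "\<forall>i<m. a i = 0"
    then show ?thesis using d yd by simp
  next
    assume a: "\<forall>i<m. a i = (if i = m - 1 then 1 else 0)"
    obtain K0 where K0: "\<And>K. K \<ge> K0 \<Longrightarrow> (S y ^^ Suc K) e = (S y ^^ K) e"
      using semi_idempotent_S_orbit_e[OF si] by blast
    define K where "K = K0 + N"
    have "(\<Sum>i<m. fscale (a i) (chain i)) = (\<Sum>i<m. if i = m - 1 then chain i else 0)"
      using a by (intro sum.cong) auto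
    also have "\<dots> = chain (m - 1)" using m_ge_2 by simp
    finally have yd': "y - chain (m - 1) = d" using yd by simp
    have "(T0 ^^ N) d = (T0 ^^ K) d" by (rule T0_pow_stable_D[OF d, symmetric]) (simp add: K_def)
    also have "\<dots> = (S y ^^ K) d" by (rule S_pow_eq_T0_pow[OF d, symmetric])
    also have "\<dots> = (S y ^^ K) y - (S y ^^ K) (chain (m - 1))"
      by (simp add: fsp.linear_diff[OF linear_S_pow] flip: yd')
    also have "\<dots> = (S y ^^ Suc (K + (m - 1))) e - (S y ^^ (K + (m - 1))) e"
      using S_pow_ge_m_e[where y=y and j="K + m"] S_pow_chain[where y=y and k=K and i="m - 1"] m_ge_2
      by (simp del: funpow.simps)
    also have "\<dots> = 0" using K0[of "K + (m - 1)"] by (simp add: K_def del: funpow.simps)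
    finally show ?thesis using yd' d by (simp add: in_E_iff Y_def)
  qed
qed

lemma semi_idempotent_S_iff: "y \<in> V \<Longrightarrow> semi_idempotent_op V (S y) \<longleftrightarrow> y \<in> D \<union> E"
  using D_union_E_imp_semi_idempotent_S semi_idempotent_S_imp_D_union_E by blast

lemma E_subset_V: "E \<subseteq> V"
proof
  fix y assume "y \<in> E"
  then obtain d where "d \<in> Y" and "y = d + chain (m - 1)" by (auto simp: E_def)
  then show "y \<in> V" using Y_subset_D D_subset_V chain_in_V fs.subspace_add[OF subspace_Vsp] by blast
qed

lemma D_E_disjoint: "D \<inter> E = {}"
proof -
  have "d + chain (m - 1) \<notin> D" if "d \<in> D" for d
    using that chain_notin_D fs.subspace_diff[OF subspace_D, of "d + chain (m - 1)" d] by auto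
  then show ?thesis using Y_subset_D by (auto simp: E_def)
qed

lemma image_S_pow_D:
  assumes y: "y \<in> D" and j: "j \<ge> N + m"
  shows "(S y ^^ j) ` V = X"
proof
  have "(S y ^^ j) d \<in> X" if "d \<in> D" for d
    using that S_pow_eq_T0_pow T0_pow_stable_D[of d j] j by (simp add: X_def)
  then show "(S y ^^ j) ` V \<subseteq> X"
    using linear_map_into_subspace_on_V[OF linear_S_pow subspace_X] S_pow_chain_eventually_D[OF y j]
      y by (auto simp: X_def)
next
  have "x = (S y ^^ j) x" if "x \<in> X" for x
    using that X_subset_D S_pow_eq_T0_pow T0_pow_fixes_X by auto
  then show "X \<subseteq> (S y ^^ j) ` V" using X_subset_D D_subset_V by blast
qed

text \<open>For \<open>y \<in> E\<close> the stationary value of the orbit of \<open>e\<close> is a fixed vector of \<open>S y\<close> outside \<open>D\<close>,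
  which raises the stable rank by one.\<close>
definition z :: "(nat \<Rightarrow> 'a) \<Rightarrow> nat \<Rightarrow> 'a" where "z y = (S y ^^ (N + m - 1)) e"

lemma S_pow_e_minus_chain_in_D:
  assumes "y \<in> E"
  shows "(S y ^^ (m - 1 + t)) e - chain (m - 1) \<in> D"
proof (induction t)
  case 0
  then show ?case using S_pow_e[of "m - 1" y] fs.subspace_0[OF subspace_D] by simp
next
  case (Suc t)
  define u where "u = (S y ^^ (m - 1 + t)) e - chain (m - 1)"
  have yc: "y - chain (m - 1) \<in> D" using assms Y_subset_D by (auto simp: in_E_iff)
  have Su: "S y u \<in> D" using Suc S_in_D by (simp add: u_def)
  have "(S y ^^ (m - 1 + Suc t)) e = S y (chain (m - 1) + u)" by (simp add: u_def)
  then have "(S y ^^ (m - 1 + Suc t)) e - chain (m - 1) = (y - chain (m - 1)) + S y u"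
    using S_chain_last[of y] by (simp add: fsp.linear_add[OF linear_S])
  then show ?case using fs.subspace_add[OF subspace_D yc Su] by (simp add: algebra_simps)
qed

lemma z_notin_D: "y \<in> E \<Longrightarrow> z y \<notin> D"
  using S_pow_e_minus_chain_in_D[of y N] m_ge_2 chain_notin_D fs.subspace_diff[OF subspace_D]
  by (fastforce simp: z_def add.commute)

lemma S_pow_fixes_z:
  assumes "y \<in> E"
  shows "(S y ^^ j) (z y) = z y"
proof -
  have "S y (z y) = z y"
    using S_pow_e_eventually_E[OF assms, of "Suc (N + m - 1)"] by (simp add: z_def)
  then show ?thesis by (induction j) simp_all
qed

lemma z_in_V: "y \<in> E \<Longrightarrow> z y \<in> V"
  using S_pow_in_V E_subset_V e_in_dom_pow by (auto simp: z_def dom_pow_def)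

lemma image_S_pow_E:
  assumes y: "y \<in> E" and j: "j \<ge> N + m"
  shows "(S y ^^ j) ` V = fs.span (insert (z y) X)"
proof
  show "(S y ^^ j) ` V \<subseteq> fs.span (insert (z y) X)"
  proof (rule image_subsetI, rule linear_map_into_subspace_on_V[OF linear_S_pow fs.subspace_span])
    fix d assume d: "d \<in> D"
    have "(S y ^^ j) d = (T0 ^^ N) d"
      using S_pow_eq_T0_pow[OF d] T0_pow_stable_D[OF d, of j] j by simp
    then show "(S y ^^ j) d \<in> fs.span (insert (z y) X)"
      using d by (auto simp: X_def intro: fs.span_base)
  next
    fix i assume "i < m"
    have "(S y ^^ j) (chain i) = z y"
      using S_pow_chain[OF \<open>i < m\<close>] S_pow_e_eventually_E[OF y, of "j + i"] j by (simp add: z_def)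
    then show "(S y ^^ j) (chain i) \<in> fs.span (insert (z y) X)" by (simp add: fs.span_base)
  qed
next
  show "fs.span (insert (z y) X) \<subseteq> (S y ^^ j) ` V"
  proof
    fix v assume "v \<in> fs.span (insert (z y) X)"
    then obtain k where "v - fscale k (z y) \<in> X"
      using fs.span_insert fs.span_eq_iff[THEN iffD2, OF subspace_X] by blast
    moreover define x where "x = v - fscale k (z y)"
    ultimately have x: "x \<in> X" "x \<in> D" and v: "v = x + fscale k (z y)"
      using X_subset_D by auto
    have "v \<in> V" unfolding v using x D_subset_V z_in_V[OF y]
      by (intro fs.subspace_add[OF subspace_Vsp] fs.subspace_scale[OF subspace_Vsp]) auto
    moreover have "(S y ^^ j) x = x"
      using S_pow_eq_T0_pow[OF x(2)] T0_pow_fixes_X[OF x(1)] by simp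
    then have "(S y ^^ j) v = v"
      unfolding v by (simp add: fsp.linear_add[OF linear_S_pow] fsp.linear_scale[OF linear_S_pow]
          S_pow_fixes_z[OF y])
    ultimately show "v \<in> (S y ^^ j) ` V" by (metis image_eqI)
  qed
qed

lemma stable_rank_S_D:
  "y \<in> D \<Longrightarrow> (THE d. \<exists>J. \<forall>j\<ge>J. vdim ((S y ^^ j) ` V) = d) = vdim X"
  by (rule the_eventual_value[of "N + m"]) (simp add: image_S_pow_D)

lemma stable_rank_S_E:
  assumes "y \<in> E"
  shows "(THE d. \<exists>J. \<forall>j\<ge>J. vdim ((S y ^^ j) ` V) = d) = vdim X + 1"
proof (rule the_eventual_value[of "N + m"], intro allI impI)
  fix j assume "N + m \<le> j"
  have "z y \<notin> fs.span X"
    using z_notin_D[OF assms] X_subset_D fs.span_eq_iff[THEN iffD2, OF subspace_X] by blast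
  then have "fs.dim (insert (z y) X) = fs.dim X + 1" by (rule fs.dim_insert_notin_span[OF finite_X])
  then show "vdim ((S y ^^ j) ` V) = vdim X + 1"
    using image_S_pow_E[OF assms \<open>N + m \<le> j\<close>] by (simp add: vdim_def)
qed

text \<open>The change of \<open>y\<close> is absorbed by adding a multiple of \<open>v0\<close> to the argument.\<close>
lemma image_S_add_T0:
  assumes v0: "v0 \<in> H"
  shows "S (y + T0 v0) ` V = S y ` V"
proof -
  define u where "u = T0 v0"
  have Sy: "S (y + u) v = S y v + fscale (v (n - 1) / c) u" for v
    by (simp add: S_def fs.scale_right_distrib algebra_simps)
  have u: "u = S y v0" "u = S (y + u) v0" using S_eq_T0[OF v0] by (simp_all add: u_def)
  have v0V: "v0 \<in> V" using v0 H_subset_V by blast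
  have shift_V: "v + fscale t v0 \<in> V" "v - fscale t v0 \<in> V" if "v \<in> V" for v t
    using that v0V subspace_Vsp by (auto intro: fs.subspace_add fs.subspace_diff fs.subspace_scale)
  show ?thesis unfolding u_def[symmetric]
  proof (intro equalityI image_subsetI)
    fix v assume "v \<in> V"
    have "S (y + u) v = S y (v + fscale (v (n - 1) / c) v0)"
      using Sy u(1) by (simp add: fsp.linear_add[OF linear_S] fsp.linear_scale[OF linear_S])
    then show "S (y + u) v \<in> S y ` V" using shift_V \<open>v \<in> V\<close> by blast
  next
    fix v assume "v \<in> V"
    have "S y v = S (y + u) (v - fscale (v (n - 1) / c) v0)"
      using Sy u(2) by (simp add: fsp.linear_diff[OF linear_S] fsp.linear_scale[OF linear_S])
    then show "S y v \<in> S (y + u) ` V" using shift_V \<open>v \<in> V\<close> by blast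
  qed
qed

lemma image_S_add_X: "x \<in> X \<Longrightarrow> S (y + x) ` V = S y ` V"
  using image_S_add_T0[of x y] X_subset_D D_subset_H T0_fixes_X by auto

lemma image_S_add_chain: "S (y + chain (m - 1)) ` V = S y ` V"
proof -
  have "chain (m - 2) \<in> H" "T0 (chain (m - 2)) = chain (m - 1)"
    using chain_in_H T0_chain[of "m - 2"] m_ge_2 by (simp_all add: Suc_diff_Suc numeral_2_eq_2)
  then show ?thesis using image_S_add_T0[of "chain (m - 2)" y] by simp
qed

lemma S_restrict: "S y v = S y (\<lambda>i. if i < n then v i else 0)"
proof -
  have "trunc (\<lambda>i. if i < n then v i else 0) = trunc v" by (rule ext) (auto simp: trunc_def)
  then show ?thesis using n_pos by (simp add: S_def T0_def)
qed

definition ext_matrix :: "(nat \<Rightarrow> 'a) \<Rightarrow> nat \<Rightarrow> nat \<Rightarrow> 'a" where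
  "ext_matrix y = (\<lambda>i j. if i < n \<and> j < n then S y (unit_vec j) i else 0)"

lemma ext_matrix_in_mats: "ext_matrix y \<in> mats n"
  by (simp add: ext_matrix_def mats_def)

lemma matop_ext_matrix:
  assumes "y \<in> V"
  shows "matop n (ext_matrix y) = (V, S y)"
proof -
  have "papp (matop n (ext_matrix y)) v i = S y v i" for v i
  proof -
    define v' where "v' = (\<lambda>i. if i < n then v i else 0)"
    have "v' \<in> V" by (simp add: v'_def Vsp_def)
    have "v' = (\<Sum>j<n. fscale (v' j) (unit_vec j))" by (rule Vsp_eq_sum_unit_vec[OF \<open>v' \<in> V\<close>])
    also have "\<dots> = (\<Sum>j<n. fscale (v j) (unit_vec j))" by (rule sum.cong) (simp_all add: v'_def)
    finally have "S y v = S y (\<Sum>j<n. fscale (v j) (unit_vec j))"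
      using S_restrict[of y v] by (simp add: v'_def)
    also have "\<dots> = (\<Sum>j<n. fscale (v j) (S y (unit_vec j)))"
      by (simp add: fsp.linear_sum[OF linear_S] fsp.linear_scale[OF linear_S])
    finally show ?thesis
      using S_in_V[OF assms, of v]
      by (cases "i < n") (simp_all add: matop_def papp_def ext_matrix_def vec_apply_simps Vsp_def mult.commute)
  qed
  then show ?thesis by (subst matop_eq_pair) (simp add: fun_eq_iff)
qed

lemma ext_matrix_unique:
  assumes A: "A \<in> mats n" and extends: "\<forall>x\<in>H. papp (matop n A) x = T x"
  shows "A = ext_matrix (papp (matop n A) (chain (m - 1)))"
proof -
  define y where "y = papp (matop n A) (chain (m - 1))"
  have "y \<in> V" by (simp add: y_def matop_in_Vsp)
  have on_H: "papp (matop n A) x = S y x" if "x \<in> H" for x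
    using that extends S_eq_T0 T0_eq_T by simp
  have agree: "papp (matop n A) v = S y v" if "v \<in> V" for v
  proof (rule linear_maps_agree_on_V[OF linear_matop linear_S _ _ that])
    fix i assume "i < m"
    then consider "i = m - 1" | "chain i \<in> H" using chain_in_H by fastforce
    then show "papp (matop n A) (chain i) = S y (chain i)"
      using S_chain_last[of y] by cases (simp_all add: y_def on_H)
  qed (use D_subset_H on_H in blast)
  have "A = ext_matrix y"
  proof (rule mats_eqI[OF A ext_matrix_in_mats])
    fix j assume "j < n"
    then show "papp (matop n A) (unit_vec j) = papp (matop n (ext_matrix y)) (unit_vec j)"
      using agree[OF unit_vec_in_Vsp[OF \<open>j < n\<close>]] matop_ext_matrix[OF \<open>y \<in> V\<close>] by simp
  qed
  then show ?thesis by (simp add: y_def)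
qed

lemma inj_on_ext_matrix: "inj_on ext_matrix V"
proof (rule inj_onI)
  fix y y' assume "y \<in> V" "y' \<in> V" "ext_matrix y = ext_matrix y'"
  then have "S y = S y'" using matop_ext_matrix by (metis prod.inject)
  then show "y = y'" using S_chain_last by metis
qed

lemma extension_matrices:
  "{A \<in> mats n. semi_idempotent V (matop n A) \<and> prank (matop n A) \<le> r
      \<and> (\<forall>x \<in> H. papp (matop n A) x = T x)}
    = ext_matrix ` {y \<in> D \<union> E. prank (V, S y) \<le> r}"
proof (intro equalityI subsetI)
  fix A assume "A \<in> {A \<in> mats n. semi_idempotent V (matop n A) \<and> prank (matop n A) \<le> r
      \<and> (\<forall>x \<in> H. papp (matop n A) x = T x)}"
  then have A: "A \<in> mats n" "semi_idempotent V (matop n A)" "prank (matop n A) \<le> r"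
    and extends: "\<forall>x \<in> H. papp (matop n A) x = T x" by auto
  define y where "y = papp (matop n A) (chain (m - 1))"
  have "y \<in> V" by (simp add: y_def matop_in_Vsp)
  have A_eq: "A = ext_matrix y" using ext_matrix_unique[OF A(1) extends] by (simp add: y_def)
  then have "matop n A = (V, S y)" using matop_ext_matrix[OF \<open>y \<in> V\<close>] by simp
  then have "y \<in> D \<union> E" "prank (V, S y) \<le> r"
    using A(2,3) semi_idempotent_S_iff[OF \<open>y \<in> V\<close>] semi_idempotent_total_iff[OF S_in_V[OF \<open>y \<in> V\<close>]]
    by auto
  then show "A \<in> ext_matrix ` {y \<in> D \<union> E. prank (V, S y) \<le> r}" using A_eq by blast
next
  fix A assume "A \<in> ext_matrix ` {y \<in> D \<union> E. prank (V, S y) \<le> r}"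
  then obtain y where y: "y \<in> D \<union> E" "prank (V, S y) \<le> r" and A: "A = ext_matrix y" by blast
  then have "y \<in> V" using D_subset_V E_subset_V by blast
  have "semi_idempotent V (V, S y)"
    using y semi_idempotent_S_iff[OF \<open>y \<in> V\<close>] semi_idempotent_total_iff[OF S_in_V[OF \<open>y \<in> V\<close>]]
    by simp
  moreover have "\<forall>x \<in> H. S y x = T x" using S_eq_T0 T0_eq_T by simp
  ultimately show "A \<in> {A \<in> mats n. semi_idempotent V (matop n A) \<and> prank (matop n A) \<le> r
      \<and> (\<forall>x \<in> H. papp (matop n A) x = T x)}"
    using A y matop_ext_matrix[OF \<open>y \<in> V\<close>] ext_matrix_in_mats by simp
qed

lemma sum_over_D_union_E_eq_0:
  "(\<Sum>y\<in>{y \<in> D \<union> E. prank (V, S y) \<le> r}. mu (int CARD('a)) (srk V (V, S y)) * f (prank (V, S y))) = 0"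
proof -
  define q where "q = int CARD('a)"
  define s where "s = vdim X"
  define g where "g y = (if prank (V, S y) \<le> r then f (prank (V, S y)) else 0)" for y
  have srk_D: "srk V (V, S y) = s" if "y \<in> D" for y
    using that D_subset_V srk_total[OF S_in_V] stable_rank_S_D by (auto simp: s_def)
  have srk_E: "srk V (V, S y) = s + 1" if "y \<in> E" for y
    using that E_subset_V srk_total[OF S_in_V] stable_rank_S_E by (auto simp: s_def)
  have g_add_X: "g (x + d) = g d" if "x \<in> X" "d \<in> Y" for x d
    using image_S_add_X[OF that(1), of d] by (simp add: g_def prank_def add.commute)
  have g_add_chain: "g (d + chain (m - 1)) = g d" for d
    using image_S_add_chain[of d] by (simp add: g_def prank_def)
  have "(\<Sum>y\<in>{y \<in> D \<union> E. prank (V, S y) \<le> r}. mu q (srk V (V, S y)) * f (prank (V, S y)))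
      = (\<Sum>y\<in>D \<union> E. if prank (V, S y) \<le> r then mu q (srk V (V, S y)) * f (prank (V, S y)) else 0)"
    by (rule sum.inter_filter) (simp add: E_def finite_D finite_Y)
  also have "\<dots> = (\<Sum>y\<in>D \<union> E. mu q (srk V (V, S y)) * g y)"
    by (rule sum.cong) (simp_all add: g_def)
  also have "\<dots> = (\<Sum>y\<in>D. mu q (srk V (V, S y)) * g y) + (\<Sum>y\<in>E. mu q (srk V (V, S y)) * g y)"
    using finite_D finite_Y D_E_disjoint by (simp add: sum.union_disjoint E_def)
  also have "(\<Sum>y\<in>D. mu q (srk V (V, S y)) * g y) = mu q s * (\<Sum>y\<in>D. g y)"
    by (simp add: srk_D sum_distrib_left)
  also have "(\<Sum>y\<in>D. g y) = q ^ s * (\<Sum>y\<in>Y. g y)"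
    using sum_over_direct_sum[OF bij_X_times_Y_D finite_X finite_Y, of g] g_add_X
      fs.card_subspace[OF _ subspace_X finite_X] by (simp add: q_def s_def vdim_def)
  also have "(\<Sum>y\<in>E. mu q (srk V (V, S y)) * g y) = mu q (s + 1) * (\<Sum>y\<in>Y. g y)"
    unfolding E_def by (subst sum.reindex) (auto simp: inj_on_def srk_E[unfolded E_def]
        g_add_chain[simplified] sum_distrib_left)
  finally show ?thesis by (simp add: q_def mu_Suc algebra_simps)
qed

end

theorem proposition3p4:
  fixes T :: "(nat \<Rightarrow> 'a::{finite,field}) \<Rightarrow> (nat \<Rightarrow> 'a)"
    and n r :: nat and f :: "nat \<Rightarrow> int"
  assumes "n \<ge> 1"
    and "linear_on (Vsp (n - 1)) T"
    and "\<forall>x \<in> Vsp (n - 1). T x \<in> Vsp n"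
    and "semi_idempotent (Vsp n) (Vsp (n - 1), T)"
    and "\<not> (T ` Vsp (n - 1) \<subseteq> Vsp (n - 1))"
  shows "(\<Sum>A \<in> {A \<in> mats n. semi_idempotent (Vsp n) (matop n A)
                 \<and> prank (matop n A) \<le> r
                 \<and> (\<forall>x \<in> Vsp (n - 1). papp (matop n A) x = T x)}.
            mu (int CARD('a)) (srk (Vsp n) (matop n A)) * f (prank (matop n A))) = 0"
proof -
  interpret extension_setting T n using assms by unfold_locales
  let ?Y = "{y \<in> D \<union> E. prank (Vsp n, S y) \<le> r}"
  have "inj_on ext_matrix ?Y"
    by (rule inj_on_subset[OF inj_on_ext_matrix]) (use D_subset_V E_subset_V in auto)
  moreover have "matop n (ext_matrix y) = (Vsp n, S y)" if "y \<in> ?Y" for y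
    using that D_subset_V E_subset_V matop_ext_matrix by blast
  ultimately show ?thesis
    unfolding extension_matrices using sum_over_D_union_E_eq_0[where r=r and f=f] by (simp add: sum.reindex)
qed

end
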